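(* Let $A$ be a real symmetric $n\times n$ matrix and $Z=\{{\bf z}_1,\dots,{\bf z}_s\}\subset\mathbb{R}^n$. Then the extended walk matrix $\widetilde W(A,Z)$ has rank $n$ if and only if the real linear span of $P(A,Z)$ equals $\mathbb{R}^{n\times n}$.
   Context: The extended walk matrix is the $n\times (ns)$ matrix $\widetilde W(A,Z):=[{\bf z}_1, A{\bf z}_1,\dots,A^{n-1}{\bf z}_1,\dots,{\bf z}_s, A{\bf z}_s,\dots,A^{n-1}{\bf z}_s]$. The set $P(A,Z):=\{A^m{\bf z}_k{\bf z}_j^TA^\ell : 1\le k,j\le s,\ 0\le m,\ell\le n-1\}$. *)

theory Defs
  imports "HOL-Analysis.Analysis"
begin

primrec matpow :: "real^'n^'n \<Rightarrow> nat \<Rightarrow> real^'n^'n" where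
  "matpow A 0 = mat 1"
| "matpow A (Suc m) = A ** matpow A m"

definition outer :: "real^'n \<Rightarrow> real^'n \<Rightarrow> real^'n^'n" where
  "outer z w = (\<chi> i j. z $ i * w $ j)"

text \<open>Column j (0-based, j < n*s) of the extended walk matrix
  [z_1, A z_1, ..., A^(n-1) z_1, ..., z_s, ..., A^(n-1) z_s], with z indexed 1..s.\<close>
definition ext_walk_col :: "real^'n^'n \<Rightarrow> (nat \<Rightarrow> real^'n) \<Rightarrow> nat \<Rightarrow> real^'n" where
  "ext_walk_col A z j = matpow A (j mod CARD('n)) *v z (j div CARD('n) + 1)"

definition ext_walk_rank :: "real^'n^'n \<Rightarrow> (nat \<Rightarrow> real^'n) \<Rightarrow> nat \<Rightarrow> nat" where
  "ext_walk_rank A z s = dim {ext_walk_col A z j | j. j < CARD('n) * s}"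

definition P_set :: "real^'n^'n \<Rightarrow> (nat \<Rightarrow> real^'n) \<Rightarrow> nat \<Rightarrow> (real^'n^'n) set" where
  "P_set A z s = {matpow A m ** outer (z k) (z j) ** matpow A l | k j m l.
      k \<in> {1..s} \<and> j \<in> {1..s} \<and> m < CARD('n) \<and> l < CARD('n)}"

end

theory Submission
  imports Defs
begin

text \<open>For symmetric \<open>A\<close> we have \<open>A\<^sup>m z\<^sub>k z\<^sub>j\<^sup>T A\<^sup>l = (A\<^sup>m z\<^sub>k)(A\<^sup>l z\<^sub>j)\<^sup>T\<close>, so \<open>P(A,Z)\<close> is the
  set of outer products \<open>u v\<^sup>T\<close> of columns \<open>u, v\<close> of the walk matrix. By bilinearity, the
  span of all \<open>u v\<^sup>T\<close> with \<open>u, v\<close> drawn from a set \<open>W\<close> contains \<open>u v\<^sup>T\<close> for all \<open>u, v\<close> in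
  the span of \<open>W\<close>; hence it is everything if \<open>W\<close> spans \<open>\<real>\<^sup>n\<close>. Conversely, if some
  \<open>x \<noteq> 0\<close> is orthogonal to \<open>W\<close>, then the linear form \<open>M \<mapsto> x\<^sup>T M x\<close> vanishes on every
  \<open>u v\<^sup>T\<close> but not on \<open>x x\<^sup>T\<close>.\<close>

lemma matpow_commute: "matpow A l ** A = A ** matpow A l"
  by (induction l) (simp_all add: matrix_mul_assoc[symmetric])

lemma transpose_matpow:
  assumes "transpose A = A"
  shows "transpose (matpow A l) = matpow A l"
  using assms by (induction l) (simp_all add: matrix_transpose_mul matpow_commute)

lemma matrix_mul_outer_mul: "M ** outer a b ** N = outer (M *v a) (transpose N *v b)"
  by (simp add: vec_eq_iff outer_def matrix_matrix_mult_def matrix_vector_mult_def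
      transpose_def sum_distrib_left sum_distrib_right mult_ac)

lemma outer_mult_vector: "outer u v *v x = (v \<bullet> x) *\<^sub>R u"
  by (simp add: vec_eq_iff outer_def matrix_vector_mult_def inner_vec_def
      sum_distrib_left mult_ac)

lemma bilinear_outer: "bilinear outer"
  unfolding bilinear_def
  by (intro conjI allI linearI) (simp_all add: vec_eq_iff outer_def algebra_simps)

lemma matrix_eq_sum_outer_rows: "(M::real^'n^'n) = (\<Sum>i\<in>UNIV. outer (axis i 1) (M $ i))"
  by (simp add: vec_eq_iff outer_def axis_def if_distrib[of "\<lambda>t. t * _"] cong: if_cong)

lemma bilinear_in_span_image:
  assumes "bilinear f" "u \<in> span U" "v \<in> span V"
  shows "f u v \<in> span {f a b | a b. a \<in> U \<and> b \<in> V}"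
proof -
  let ?T = "span {f a b | a b. a \<in> U \<and> b \<in> V}"
  have "f a v \<in> ?T" if "a \<in> U" for a
  proof -
    have "f a ` span V = span (f a ` V)"
      using assms(1) by (simp add: bilinear_def span_linear_image)
    also have "\<dots> \<subseteq> ?T"
      using that by (intro span_mono) blast
    finally show ?thesis using assms(3) by blast
  qed
  then have "span ((\<lambda>a. f a v) ` U) \<subseteq> ?T"
    by (intro span_minimal subspace_span) blast
  moreover have "(\<lambda>a. f a v) ` span U = span ((\<lambda>a. f a v) ` U)"
    using assms(1) by (simp add: bilinear_def span_linear_image)
  ultimately show ?thesis using assms(2) by blast
qed

lemma span_outers_eq_UNIV_iff:
  fixes W :: "(real^'n) set"
  shows "span {outer u v | u v. u \<in> W \<and> v \<in> W} = UNIV \<longleftrightarrow> span W = UNIV"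
proof
  assume span_outers: "span {outer u v | u v. u \<in> W \<and> v \<in> W} = UNIV"
  show "span W = UNIV"
  proof (rule ccontr)
    assume "span W \<noteq> UNIV"
    then have "span W \<subset> span UNIV" by auto
    then obtain x where x: "x \<noteq> 0" "\<And>y. y \<in> span W \<Longrightarrow> orthogonal x y"
      using orthogonal_to_subspace_exists_gen by blast
    define S where "S = {M :: real^'n^'n. x \<bullet> (M *v x) = 0}"
    have "subspace S"
      unfolding S_def subspace_def
      by (simp add: matrix_vector_mult_add_rdistrib inner_add_right
          scaleR_matrix_vector_assoc[symmetric])
    moreover have "{outer u v | u v. u \<in> W \<and> v \<in> W} \<subseteq> S"
      using x(2) by (auto simp: S_def outer_mult_vector orthogonal_def span_base)
    ultimately have "outer x x \<in> S"
      using span_minimal span_outers by blast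
    with x(1) show False by (simp add: S_def outer_mult_vector)
  qed
next
  assume "span W = UNIV"
  then have "outer u v \<in> span {outer u v | u v. u \<in> W \<and> v \<in> W}" for u v
    using bilinear_in_span_image[OF bilinear_outer] by blast
  then have "M \<in> span {outer u v | u v. u \<in> W \<and> v \<in> W}" for M :: "real^'n^'n"
    by (subst matrix_eq_sum_outer_rows) (intro span_sum)
  then show "span {outer u v | u v. u \<in> W \<and> v \<in> W} = UNIV" by blast
qed

lemma ext_walk_cols_eq:
  fixes A :: "real^'n^'n"
  shows "{ext_walk_col A z j | j. j < CARD('n) * s} =
     {matpow A m *v z k | k m. k \<in> {1..s} \<and> m < CARD('n)}"
  (is "?cols = ?walks")
proof
  show "?cols \<subseteq> ?walks"
  proof
    fix x assume "x \<in> ?cols"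
    then obtain j where j: "j < CARD('n) * s" "x = ext_walk_col A z j" by blast
    then have "j div CARD('n) < s" by (simp add: less_mult_imp_div_less mult.commute)
    with j show "x \<in> ?walks" unfolding ext_walk_col_def by force
  qed
  show "?walks \<subseteq> ?cols"
  proof
    fix x assume "x \<in> ?walks"
    then obtain k m where km: "k \<in> {1..s}" "m < CARD('n)" "x = matpow A m *v z k" by blast
    define j where "j = (k - 1) * CARD('n) + m"
    have "j < (k - 1) * CARD('n) + CARD('n)" using km(2) by (simp add: j_def)
    also have "\<dots> = k * CARD('n)" using km(1) by (cases k) auto
    also have "\<dots> \<le> CARD('n) * s" using km(1) by simp
    finally have "j < CARD('n) * s" .
    moreover have "j mod CARD('n) = m" "j div CARD('n) + 1 = k"
      using km by (auto simp: j_def)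
    ultimately show "x \<in> ?cols" unfolding ext_walk_col_def using km(3) by force
  qed
qed

lemma P_set_eq_outers_of_walks:
  fixes A :: "real^'n^'n"
  assumes "transpose A = A"
  shows "P_set A z s = {outer u v | u v. u \<in> {ext_walk_col A z j | j. j < CARD('n) * s} \<and>
                                         v \<in> {ext_walk_col A z j | j. j < CARD('n) * s}}"
  unfolding P_set_def ext_walk_cols_eq
  by (auto simp: matrix_mul_outer_mul transpose_matpow[OF assms]; metis)

theorem lemma3p4:
  fixes A :: "real^'n^'n" and z :: "nat \<Rightarrow> real^'n" and s :: nat
  assumes "transpose A = A"
  shows "ext_walk_rank A z s = CARD('n) \<longleftrightarrow> span (P_set A z s) = UNIV"
  using dim_eq_full[of "{ext_walk_col A z j | j. j < CARD('n) * s}"]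
  unfolding ext_walk_rank_def P_set_eq_outers_of_walks[OF assms] span_outers_eq_UNIV_iff
  by simp

end
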